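(* Let $G$ be a $k$-colorable chordal graph, let $T$ be a clique of $G$ with $k-1\le|T|$, and let $v\in T$. If $\mathcal{C}^c_k(G,T)$ is a $(k-1,k)$-color-complete graph, then $\mathcal{C}^c_k(G,T\setminus\{v\})$ is a $(k-2,k)$-color-complete graph. If $\mathcal{C}^c_k(G,T)$ is a forest that satisfies the injective neighborhood property, then $\mathcal{C}^c_k(G,T\setminus\{v\})$ is a forest that satisfies the injective neighborhood property.
   Context: A chordal graph has no induced cycle of length $>3$. A $k$-coloring of $G$ is a map $\alpha:V(G)\to\{1,\dots,k\}$ with $\alpha(u)\ne\alpha(w)$ for all edges $uw$. $\mathcal{C}_k(G)$ has the $k$-colorings as nodes, adjacent iff they differ on exactly one vertex. For $T\subseteq V(G)$, label each coloring $\gamma$ by $\gamma|_T$. A label component is a maximal set of colorings with the same label inducing a connected subgraph of $\mathcal{C}_k(G)$. The contracted solution graph $\mathcal{C}^c_k(G,T)=(H,\ell)$ has one node $x$ per label component $S_x$, distinct $x,y$ adjacent iff some $\gamma\in S_x,\gamma'\in S_y$ are adjacent in $\mathcal{C}_k(G)$, and $\ell(x)$ the common label on $S_x$. For $1\le m\le k$, a labeled graph $(H,\ell)$ is $(m,k)$-color-complete if there is a set $T$ with $|T|=m$ such that every label is a $k$-coloring of the complete graph on $T$, every such $k$-coloring is the label of exactly one node, and two nodes are adjacent iff their labels differ on exactly one element of $T$. $(H,\ell)$ satisfies the injective neighborhood property if any two distinct neighbors of any node have distinct labels. *)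

theory Defs
  imports Main
begin

definition simple_graph :: "'a set \<Rightarrow> ('a \<Rightarrow> 'a \<Rightarrow> bool) \<Rightarrow> bool" where
  "simple_graph V E \<longleftrightarrow> finite V \<and> (\<forall>u w. E u w \<longrightarrow> u \<in> V \<and> w \<in> V \<and> u \<noteq> w \<and> E w u)"

definition induced_cycle :: "'a set \<Rightarrow> ('a \<Rightarrow> 'a \<Rightarrow> bool) \<Rightarrow> 'a list \<Rightarrow> bool" where
  "induced_cycle V E cs \<longleftrightarrow> distinct cs \<and> set cs \<subseteq> V \<and>
     (\<forall>i < length cs. \<forall>j < length cs.
        E (cs ! i) (cs ! j) \<longleftrightarrow> (j = (i + 1) mod length cs \<or> i = (j + 1) mod length cs))"

definition chordal :: "'a set \<Rightarrow> ('a \<Rightarrow> 'a \<Rightarrow> bool) \<Rightarrow> bool" where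
  "chordal V E \<longleftrightarrow> \<not> (\<exists>cs. length cs > 3 \<and> induced_cycle V E cs)"

definition is_clique :: "'a set \<Rightarrow> ('a \<Rightarrow> 'a \<Rightarrow> bool) \<Rightarrow> 'a set \<Rightarrow> bool" where
  "is_clique V E T \<longleftrightarrow> T \<subseteq> V \<and> (\<forall>u\<in>T. \<forall>w\<in>T. u \<noteq> w \<longrightarrow> E u w)"

definition is_coloring :: "'a set \<Rightarrow> ('a \<Rightarrow> 'a \<Rightarrow> bool) \<Rightarrow> nat \<Rightarrow> ('a \<rightharpoonup> nat) \<Rightarrow> bool" where
  "is_coloring V E k \<alpha> \<longleftrightarrow> dom \<alpha> = V \<and> ran \<alpha> \<subseteq> {1..k} \<and>
     (\<forall>u w. E u w \<longrightarrow> \<alpha> u \<noteq> \<alpha> w)"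

definition colorable :: "'a set \<Rightarrow> ('a \<Rightarrow> 'a \<Rightarrow> bool) \<Rightarrow> nat \<Rightarrow> bool" where
  "colorable V E k \<longleftrightarrow> (\<exists>\<alpha>. is_coloring V E k \<alpha>)"

definition complete_edges :: "'a set \<Rightarrow> 'a \<Rightarrow> 'a \<Rightarrow> bool" where
  "complete_edges T u w \<longleftrightarrow> u \<in> T \<and> w \<in> T \<and> u \<noteq> w"

definition differ_on_one :: "'a set \<Rightarrow> ('a \<rightharpoonup> nat) \<Rightarrow> ('a \<rightharpoonup> nat) \<Rightarrow> bool" where
  "differ_on_one D \<alpha> \<beta> \<longleftrightarrow> card {v\<in>D. \<alpha> v \<noteq> \<beta> v} = 1"

(* adjacency in the reconfiguration graph C_k(G) *)
definition col_adj :: "'a set \<Rightarrow> ('a \<Rightarrow> 'a \<Rightarrow> bool) \<Rightarrow> nat \<Rightarrow> ('a \<rightharpoonup> nat) \<Rightarrow> ('a \<rightharpoonup> nat) \<Rightarrow> bool" where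
  "col_adj V E k \<alpha> \<beta> \<longleftrightarrow> is_coloring V E k \<alpha> \<and> is_coloring V E k \<beta> \<and> differ_on_one V \<alpha> \<beta>"

definition same_label_adj :: "'a set \<Rightarrow> ('a \<Rightarrow> 'a \<Rightarrow> bool) \<Rightarrow> nat \<Rightarrow> 'a set \<Rightarrow> ('a \<rightharpoonup> nat) \<Rightarrow> ('a \<rightharpoonup> nat) \<Rightarrow> bool" where
  "same_label_adj V E k T \<alpha> \<beta> \<longleftrightarrow> col_adj V E k \<alpha> \<beta> \<and> \<alpha> |` T = \<beta> |` T"

definition label_components :: "'a set \<Rightarrow> ('a \<Rightarrow> 'a \<Rightarrow> bool) \<Rightarrow> nat \<Rightarrow> 'a set \<Rightarrow> ('a \<rightharpoonup> nat) set set" where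
  "label_components V E k T =
     (\<lambda>\<gamma>. {\<gamma>'. (same_label_adj V E k T)\<^sup>*\<^sup>* \<gamma> \<gamma>'}) ` {\<gamma>. is_coloring V E k \<gamma>}"

(* contracted solution graph C^c_k(G,T) = (H, l): nodes, adjacency, labels *)
definition contr_nodes :: "'a set \<Rightarrow> ('a \<Rightarrow> 'a \<Rightarrow> bool) \<Rightarrow> nat \<Rightarrow> 'a set \<Rightarrow> ('a \<rightharpoonup> nat) set set" where
  "contr_nodes V E k T = label_components V E k T"

definition contr_adj :: "'a set \<Rightarrow> ('a \<Rightarrow> 'a \<Rightarrow> bool) \<Rightarrow> nat \<Rightarrow> ('a \<rightharpoonup> nat) set \<Rightarrow> ('a \<rightharpoonup> nat) set \<Rightarrow> bool" where
  "contr_adj V E k S S' \<longleftrightarrow> S \<noteq> S' \<and> (\<exists>\<gamma>\<in>S. \<exists>\<gamma>'\<in>S'. col_adj V E k \<gamma> \<gamma>')"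

definition contr_label :: "'a set \<Rightarrow> ('a \<rightharpoonup> nat) set \<Rightarrow> ('a \<rightharpoonup> nat)" where
  "contr_label T S = (THE c. \<forall>\<gamma>\<in>S. \<gamma> |` T = c)"

definition color_complete ::
  "nat \<Rightarrow> nat \<Rightarrow> 'n set \<Rightarrow> ('n \<Rightarrow> 'n \<Rightarrow> bool) \<Rightarrow> ('n \<Rightarrow> ('a \<rightharpoonup> nat)) \<Rightarrow> bool" where
  "color_complete m k N A l \<longleftrightarrow>
     (\<exists>T'. finite T' \<and> card T' = m \<and>
        (\<forall>x\<in>N. is_coloring T' (complete_edges T') k (l x)) \<and>
        (\<forall>c. is_coloring T' (complete_edges T') k c \<longrightarrow> (\<exists>!x. x \<in> N \<and> l x = c)) \<and>
        (\<forall>x\<in>N. \<forall>y\<in>N. x \<noteq> y \<longrightarrow> (A x y \<longleftrightarrow> differ_on_one T' (l x) (l y))))"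

definition has_cycle :: "'n set \<Rightarrow> ('n \<Rightarrow> 'n \<Rightarrow> bool) \<Rightarrow> bool" where
  "has_cycle N A \<longleftrightarrow> (\<exists>cs. length cs \<ge> 3 \<and> distinct cs \<and> set cs \<subseteq> N \<and>
      (\<forall>i < length cs. A (cs ! i) (cs ! ((i + 1) mod length cs))))"

definition is_forest :: "'n set \<Rightarrow> ('n \<Rightarrow> 'n \<Rightarrow> bool) \<Rightarrow> bool" where
  "is_forest N A \<longleftrightarrow> \<not> has_cycle N A"

definition injective_nbhd :: "'n set \<Rightarrow> ('n \<Rightarrow> 'n \<Rightarrow> bool) \<Rightarrow> ('n \<Rightarrow> 'b) \<Rightarrow> bool" where
  "injective_nbhd N A l \<longleftrightarrow>
     (\<forall>x\<in>N. \<forall>y\<in>N. \<forall>z\<in>N. A x y \<and> A x z \<and> y \<noteq> z \<longrightarrow> l y \<noteq> l z)"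

end

theory Submission
  imports Defs
begin

text \<open>Colourings of \<open>G\<close> that agree on the clique \<open>T - {v}\<close> use at least \<open>k - 2\<close> distinct colours
  there, none of which may appear at \<open>v\<close>; hence they take at most two values at \<open>v\<close>. So every label
  component for \<open>T - {v}\<close> is a union of label components for \<open>T\<close> whose labels differ only at \<open>v\<close>.
  If \<open>\<C>\<^sup>c\<^sub>k(G,T)\<close> has the injective neighbourhood property, these form a clique of at most two
  nodes, and collapsing them maps \<open>\<C>\<^sup>c\<^sub>k(G,T)\<close> onto \<open>\<C>\<^sup>c\<^sub>k(G,T - {v})\<close> in such a way that
  cycles lift and injectivity of neighbourhoods descends. If \<open>\<C>\<^sup>c\<^sub>k(G,T)\<close> is
  \<open>(k - 1, k)\<close>-colour-complete, then \<open>|T| = k - 1\<close>, every colouring of \<open>T - {v}\<close> extends to \<open>T\<close>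
  by a colour left free at \<open>v\<close>, and adjacent labels on \<open>T - {v}\<close> even leave a common free colour,
  so both the bijection with the colourings and the adjacency rule descend to \<open>T - {v}\<close>.\<close>

lemma cycle_condition_iff_successively:
  assumes "cs \<noteq> []"
  shows "(\<forall>i<length cs. A (cs ! i) (cs ! ((i + 1) mod length cs)))
           \<longleftrightarrow> successively A cs \<and> A (last cs) (hd cs)"
proof
  assume cyc: "\<forall>i<length cs. A (cs ! i) (cs ! ((i + 1) mod length cs))"
  have "A (cs ! i) (cs ! Suc i)" if "Suc i < length cs" for i
    using cyc[rule_format, of i] that by simp
  moreover have "A (last cs) (hd cs)"
    using cyc[rule_format, of "length cs - 1"] assms by (simp add: last_conv_nth hd_conv_nth)
  ultimately show "successively A cs \<and> A (last cs) (hd cs)"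
    by (simp add: successively_conv_nth)
next
  assume succ: "successively A cs \<and> A (last cs) (hd cs)"
  show "\<forall>i<length cs. A (cs ! i) (cs ! ((i + 1) mod length cs))"
  proof (intro allI impI)
    fix i assume i: "i < length cs"
    show "A (cs ! i) (cs ! ((i + 1) mod length cs))"
    proof (cases "Suc i < length cs")
      case True
      then show ?thesis using succ successively_nth by fastforce
    next
      case False
      then have "Suc i = length cs" using i by simp
      then have "i = length cs - 1" "(i + 1) mod length cs = 0" by simp_all
      then show ?thesis using succ assms by (simp add: last_conv_nth hd_conv_nth)
    qed
  qed
qed

lemma has_cycle_iff_successively:
  "has_cycle N A \<longleftrightarrow> (\<exists>cs. length cs \<ge> 3 \<and> distinct cs \<and> set cs \<subseteq> N \<and>
     successively A cs \<and> A (last cs) (hd cs))"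
  unfolding has_cycle_def
  by (metis (no_types, lifting) cycle_condition_iff_successively list.size(3) not_numeral_le_zero)

text \<open>As the fibres of \<open>\<pi>\<close> are cliques, the lifted path enters and leaves each fibre within
  one extra step, so it stays simple.\<close>

lemma lift_path:
  assumes edges_lift: "\<And>X Y. X \<in> N' \<Longrightarrow> Y \<in> N' \<Longrightarrow> A' X Y \<Longrightarrow>
      \<exists>S\<in>N. \<exists>S'\<in>N. \<pi> S = X \<and> \<pi> S' = Y \<and> A S S'"
    and fibres_cliques: "\<And>S S'. S \<in> N \<Longrightarrow> S' \<in> N \<Longrightarrow> \<pi> S = \<pi> S' \<Longrightarrow> S = S' \<or> A S S'"
  shows "\<lbrakk>successively A' Xs; distinct Xs; set Xs \<subseteq> N'; Xs \<noteq> [];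
          s \<in> N; \<pi> s = hd Xs; t \<in> N; \<pi> t = last Xs\<rbrakk> \<Longrightarrow>
    \<exists>ws. ws \<noteq> [] \<and> hd ws = s \<and> last ws = t \<and> successively A ws \<and> distinct ws \<and>
      set ws \<subseteq> N \<and> \<pi> ` set ws \<subseteq> set Xs \<and> length Xs \<le> length ws"
proof (induction Xs arbitrary: s)
  case Nil
  then show ?case by simp
next
  case (Cons X Xs)
  show ?case
  proof (cases "Xs = []")
    case True
    then have "\<pi> s = \<pi> t" using Cons.prems by simp
    show ?thesis
    proof (cases "s = t")
      case True
      then show ?thesis using Cons.prems \<open>Xs = []\<close> by (intro exI[of _ "[s]"]) auto
    next
      case False
      then have "A s t" using fibres_cliques Cons.prems \<open>\<pi> s = \<pi> t\<close> by blast
      then show ?thesis using False Cons.prems \<open>Xs = []\<close> by (intro exI[of _ "[s, t]"]) auto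
    qed
  next
    case False
    then obtain Y Ys where Xs: "Xs = Y # Ys" by (cases Xs) auto
    then have "X \<in> N'" "Y \<in> N'" "A' X Y" using Cons.prems by auto
    then obtain q j where qj: "q \<in> N" "j \<in> N" "\<pi> q = X" "\<pi> j = Y" "A q j"
      using edges_lift by blast
    obtain ws where ws: "ws \<noteq> []" "hd ws = j" "last ws = t" "successively A ws"
        "distinct ws" "set ws \<subseteq> N" "\<pi> ` set ws \<subseteq> set Xs" "length Xs \<le> length ws"
      using Cons.IH[of j] Cons.prems qj Xs by auto
    define pre where "pre = (if s = q then [s] else [s, q])"
    have "s \<noteq> q \<Longrightarrow> A s q" using fibres_cliques Cons.prems(5,6) qj(1,3) by (metis list.sel(1))
    then have pre: "pre \<noteq> []" "hd pre = s" "last pre = q" "successively A pre" "distinct pre"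
        "set pre \<subseteq> N" "\<pi> ` set pre \<subseteq> {X}"
      using Cons.prems qj unfolding pre_def by auto
    have "X \<notin> set Xs" using Cons.prems by simp
    then have "set pre \<inter> set ws = {}" using pre(7) ws(7) by blast
    moreover have "length (X # Xs) \<le> length (pre @ ws)" using pre(1) ws(8) by (cases pre) auto
    ultimately show ?thesis using pre ws qj(5)
      by (intro exI[of _ "pre @ ws"]) (auto simp: successively_append_iff)
  qed
qed

lemma has_cycle_lift:
  assumes edges_lift: "\<And>X Y. X \<in> N' \<Longrightarrow> Y \<in> N' \<Longrightarrow> A' X Y \<Longrightarrow>
      \<exists>S\<in>N. \<exists>S'\<in>N. \<pi> S = X \<and> \<pi> S' = Y \<and> A S S'"
    and fibres_cliques: "\<And>S S'. S \<in> N \<Longrightarrow> S' \<in> N \<Longrightarrow> \<pi> S = \<pi> S' \<Longrightarrow> S = S' \<or> A S S'"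
    and "has_cycle N' A'"
  shows "has_cycle N A"
proof -
  obtain Xs where Xs: "length Xs \<ge> 3" "distinct Xs" "set Xs \<subseteq> N'" "successively A' Xs"
      "A' (last Xs) (hd Xs)"
    using \<open>has_cycle N' A'\<close> unfolding has_cycle_iff_successively by blast
  then have "Xs \<noteq> []" by auto
  then have "last Xs \<in> N'" "hd Xs \<in> N'" using Xs(3) by auto
  then obtain t s where ts: "t \<in> N" "s \<in> N" "\<pi> t = last Xs" "\<pi> s = hd Xs" "A t s"
    using edges_lift Xs(5) by blast
  obtain ws where "ws \<noteq> []" "hd ws = s" "last ws = t" "successively A ws" "distinct ws"
      "set ws \<subseteq> N" "length Xs \<le> length ws"
    using lift_path[OF edges_lift fibres_cliques Xs(4,2,3) \<open>Xs \<noteq> []\<close> ts(2,4,1,3)] by blast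
  then show ?thesis
    unfolding has_cycle_iff_successively using Xs(1) ts(5) by (intro exI[of _ ws]) auto
qed

lemma restrict_map_eq_iff: "m |` A = m' |` A \<longleftrightarrow> (\<forall>x\<in>A. m x = m' x)"
  by (auto simp: restrict_map_def fun_eq_iff)

lemma restrict_map_eq_subset: "A \<subseteq> B \<Longrightarrow> m |` B = m' |` B \<Longrightarrow> m |` A = m' |` A"
  unfolding restrict_map_eq_iff by blast

lemma restrict_map_upd_diff:
  assumes "dom c = A - {v}" "m |` A = c(v \<mapsto> p)"
  shows "m |` (A - {v}) = c"
proof
  fix x
  show "(m |` (A - {v})) x = c x"
  proof (cases "x \<in> A - {v}")
    case True
    then show ?thesis using fun_cong[OF assms(2), of x] by simp
  next
    case False
    then show ?thesis using assms(1) by (metis domIff restrict_out)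
  qed
qed

lemma restrict_map_eq_iff_at:
  assumes "m |` (A - {v}) = m' |` (A - {v})" "v \<in> A"
  shows "m |` A = m' |` A \<longleftrightarrow> m v = m' v"
  using assms by (auto simp: restrict_map_eq_iff)

lemma card_ran_le_card_dom:
  assumes "finite (dom m)"
  shows "card (ran m) \<le> card (dom m)"
proof -
  have "ran m = (\<lambda>x. the (m x)) ` dom m" by (force simp: ran_def dom_def)
  then show ?thesis using card_image_le[OF assms] by simp
qed

lemma card_ran_union_le:
  assumes "dom a = D" "dom b = D" "finite D" "\<forall>x\<in>D. x \<noteq> u \<longrightarrow> a x = b x"
  shows "card (ran a \<union> ran b) \<le> card D + 1"
proof -
  have "ran b \<subseteq> insert (the (b u)) (ran a)"
    using assms(1,2,4) by (force simp: ran_def)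
  then have "card (ran a \<union> ran b) \<le> card (insert (the (b u)) (ran a))"
    using assms(1,3) by (intro card_mono) (auto simp: finite_ran)
  also have "\<dots> \<le> card (ran a) + 1"
    by (rule card_insert_le_m1) simp_all
  also have "\<dots> \<le> card D + 1"
    using card_ran_le_card_dom assms(1,3) by fastforce
  finally show ?thesis .
qed

lemma ex_not_in_if_card_less: "finite R \<Longrightarrow> card R < k \<Longrightarrow> \<exists>p\<in>{1..k}. p \<notin> R"
  using card_mono[of R "{1..k}"] by fastforce

lemma differ_on_one_iff:
  "differ_on_one D a b \<longleftrightarrow> (\<exists>u\<in>D. a u \<noteq> b u \<and> (\<forall>x\<in>D. x \<noteq> u \<longrightarrow> a x = b x))"
  unfolding differ_on_one_def One_nat_def card_1_singleton_iff by blast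

lemma differ_on_one_neq: "differ_on_one D a b \<Longrightarrow> a \<noteq> b"
  by (auto simp: differ_on_one_iff)

lemma differ_on_one_commute: "differ_on_one D a b \<longleftrightarrow> differ_on_one D b a"
  unfolding differ_on_one_iff by metis

lemma col_adj_commute: "col_adj V E k a b \<longleftrightarrow> col_adj V E k b a"
  unfolding col_adj_def using differ_on_one_commute by blast

lemma col_adj_eq_off:
  assumes "col_adj V E k a b" "a u \<noteq> b u" "x \<noteq> u"
  shows "a x = b x"
proof -
  have "dom a = V" "dom b = V" using assms(1) unfolding col_adj_def is_coloring_def by auto
  then show ?thesis
    using assms unfolding col_adj_def differ_on_one_iff by (metis domIff)
qed

lemma coloring_value: "is_coloring V E k a \<Longrightarrow> u \<in> V \<Longrightarrow> a u \<in> Some ` {1..k}"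
  unfolding is_coloring_def by (fastforce intro: ranI)

lemma coloring_clique_inj:
  "is_coloring V E k a \<Longrightarrow> is_clique V E T \<Longrightarrow> inj_on a T"
  unfolding is_coloring_def is_clique_def inj_on_def by blast

lemma coloring_restrict_clique:
  assumes "is_coloring V E k a" "is_clique V E T" "A \<subseteq> T"
  shows "is_coloring A (complete_edges A) k (a |` A)"
  using assms unfolding is_coloring_def is_clique_def complete_edges_def
  by (auto 4 3 dest!: ran_restrictD intro: ranI)

lemma complete_coloring_extend:
  assumes "is_coloring A (complete_edges A) k c" "p \<in> {1..k}" "p \<notin> ran c" "v \<notin> A"
  shows "is_coloring (insert v A) (complete_edges (insert v A)) k (c(v \<mapsto> p))"
proof -
  have "dom c = A" "ran c \<subseteq> {1..k}" using assms(1) unfolding is_coloring_def by auto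
  then have "c v = None" "\<And>u. c u \<noteq> Some p" using assms(3,4) by (auto intro: ranI)
  then show ?thesis
    using assms(1,2) \<open>dom c = A\<close> \<open>ran c \<subseteq> {1..k}\<close>
    unfolding is_coloring_def complete_edges_def by auto
qed

definition label_comp ::
  "'a set \<Rightarrow> ('a \<Rightarrow> 'a \<Rightarrow> bool) \<Rightarrow> nat \<Rightarrow> 'a set \<Rightarrow> ('a \<rightharpoonup> nat) \<Rightarrow> ('a \<rightharpoonup> nat) set" where
  "label_comp V E k U a = {b. (same_label_adj V E k U)\<^sup>*\<^sup>* a b}"

lemma mem_label_comp: "b \<in> label_comp V E k U a \<longleftrightarrow> (same_label_adj V E k U)\<^sup>*\<^sup>* a b"
  by (simp add: label_comp_def)

lemma label_comp_self: "a \<in> label_comp V E k U a"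
  by (simp add: label_comp_def)

lemma contr_nodes_eq: "contr_nodes V E k U = label_comp V E k U ` {a. is_coloring V E k a}"
  by (simp add: contr_nodes_def label_components_def label_comp_def)

lemma label_comp_in_contr_nodes: "is_coloring V E k a \<Longrightarrow> label_comp V E k U a \<in> contr_nodes V E k U"
  by (simp add: contr_nodes_eq)

lemma contr_adj_commute: "contr_adj V E k X Y \<longleftrightarrow> contr_adj V E k Y X"
  unfolding contr_adj_def by (metis col_adj_commute)

lemma symp_same_label_adj: "symp (same_label_adj V E k U)"
  unfolding same_label_adj_def by (intro sympI) (metis col_adj_commute)

lemma same_label_reach_label:
  "(same_label_adj V E k U)\<^sup>*\<^sup>* a b \<Longrightarrow> b |` U = a |` U"
  by (induction rule: rtranclp_induct) (auto simp: same_label_adj_def)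

lemma same_label_reach_coloring:
  "(same_label_adj V E k U)\<^sup>*\<^sup>* a b \<Longrightarrow> is_coloring V E k a \<Longrightarrow> is_coloring V E k b"
  by (induction rule: rtranclp_induct) (auto simp: same_label_adj_def col_adj_def)

lemma same_label_reach_mono:
  assumes "U \<subseteq> W" "(same_label_adj V E k W)\<^sup>*\<^sup>* a b"
  shows "(same_label_adj V E k U)\<^sup>*\<^sup>* a b"
proof -
  have "same_label_adj V E k W \<le> same_label_adj V E k U"
  proof (intro predicate2I)
    fix x y assume "same_label_adj V E k W x y"
    then show "same_label_adj V E k U x y"
      using assms(1) unfolding same_label_adj_def restrict_map_eq_iff by blast
  qed
  then show ?thesis using assms(2) rtranclp_mono by blast
qed

lemma label_comp_eq_iff:
  "label_comp V E k U a = label_comp V E k U b \<longleftrightarrow> (same_label_adj V E k U)\<^sup>*\<^sup>* a b"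
proof
  assume "label_comp V E k U a = label_comp V E k U b"
  then show "(same_label_adj V E k U)\<^sup>*\<^sup>* a b"
    by (metis label_comp_self mem_label_comp)
next
  assume ab: "(same_label_adj V E k U)\<^sup>*\<^sup>* a b"
  then have "(same_label_adj V E k U)\<^sup>*\<^sup>* b a"
    using symp_rtranclp[OF symp_same_label_adj] by (blast dest: sympD)
  then show "label_comp V E k U a = label_comp V E k U b"
    using ab unfolding label_comp_def by (auto intro: rtranclp_trans)
qed

lemma label_comp_eq_if_mem: "b \<in> label_comp V E k U a \<Longrightarrow> label_comp V E k U a = label_comp V E k U b"
  by (simp add: label_comp_eq_iff mem_label_comp)

lemma contr_label_label_comp: "contr_label U (label_comp V E k U a) = a |` U"
  unfolding contr_label_def
proof (rule the_equality)
  show "\<forall>\<gamma>\<in>label_comp V E k U a. \<gamma> |` U = a |` U"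
    by (simp add: mem_label_comp same_label_reach_label)
qed (metis label_comp_self)

lemma label_comp_neq_if_label_neq:
  "a |` U \<noteq> b |` U \<Longrightarrow> label_comp V E k U a \<noteq> label_comp V E k U b"
  by (metis contr_label_label_comp)

lemma label_comp_eq_if_adj_same_label:
  "col_adj V E k a b \<Longrightarrow> a |` U = b |` U \<Longrightarrow> label_comp V E k U a = label_comp V E k U b"
  by (simp add: label_comp_eq_iff r_into_rtranclp same_label_adj_def)

lemma contr_adj_label_compI:
  assumes "col_adj V E k a b" "a |` U \<noteq> b |` U"
  shows "contr_adj V E k (label_comp V E k U a) (label_comp V E k U b)"
proof -
  have "label_comp V E k U a \<noteq> label_comp V E k U b"
    using assms(2) by (rule label_comp_neq_if_label_neq)
  then show ?thesis using assms(1) label_comp_self unfolding contr_adj_def by blast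
qed

lemma contr_adj_nodesE:
  assumes "contr_adj V E k X Y" "X \<in> contr_nodes V E k U" "Y \<in> contr_nodes V E k U"
  obtains g d where "col_adj V E k g d" "g |` U \<noteq> d |` U"
    "X = label_comp V E k U g" "Y = label_comp V E k U d"
proof -
  obtain g d where gd: "g \<in> X" "d \<in> Y" "col_adj V E k g d" "X \<noteq> Y"
    using assms(1) unfolding contr_adj_def by blast
  have "X = label_comp V E k U g" "Y = label_comp V E k U d"
    using gd(1,2) assms(2,3) label_comp_eq_if_mem unfolding contr_nodes_eq by blast+
  moreover have "g |` U \<noteq> d |` U"
    using gd(3,4) label_comp_eq_if_adj_same_label calculation by metis
  ultimately show ?thesis using that gd(3) by blast
qed

lemma contr_adj_label_neq:
  assumes "contr_adj V E k X Y" "X \<in> contr_nodes V E k U" "Y \<in> contr_nodes V E k U"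
  shows "contr_label U X \<noteq> contr_label U Y"
  using contr_adj_nodesE[OF assms] contr_label_label_comp by metis

lemma contr_adj_differ_on_one:
  assumes "contr_adj V E k X Y" "X \<in> contr_nodes V E k U" "Y \<in> contr_nodes V E k U"
  shows "differ_on_one U (contr_label U X) (contr_label U Y)"
proof -
  obtain g d where gd: "col_adj V E k g d" "g |` U \<noteq> d |` U"
      "X = label_comp V E k U g" "Y = label_comp V E k U d"
    using contr_adj_nodesE[OF assms] .
  then obtain u where u: "u \<in> U" "g u \<noteq> d u" by (auto simp: restrict_map_eq_iff)
  then have "\<forall>x\<in>U. x \<noteq> u \<longrightarrow> g x = d x" using col_adj_eq_off[OF gd(1)] by blast
  then show ?thesis
    using u unfolding gd(3,4) contr_label_label_comp differ_on_one_iff by auto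
qed

text \<open>For a colourable graph every label has domain \<open>U\<close>, so \<open>U\<close> is the only possible witness
  of colour-completeness.\<close>

lemma color_complete_contrD:
  assumes "color_complete m k (contr_nodes V E k U) (contr_adj V E k) (contr_label U)"
    and "colorable V E k" "U \<subseteq> V"
  shows "card U = m"
    and "is_coloring U (complete_edges U) k c \<Longrightarrow>
           \<exists>!X. X \<in> contr_nodes V E k U \<and> contr_label U X = c"
    and "X \<in> contr_nodes V E k U \<Longrightarrow> Y \<in> contr_nodes V E k U \<Longrightarrow> X \<noteq> Y \<Longrightarrow>
           contr_adj V E k X Y \<longleftrightarrow> differ_on_one U (contr_label U X) (contr_label U Y)"
proof -
  obtain U' where U': "card U' = m"
      "\<forall>X\<in>contr_nodes V E k U. is_coloring U' (complete_edges U') k (contr_label U X)"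
      "\<forall>c. is_coloring U' (complete_edges U') k c \<longrightarrow>
          (\<exists>!X. X \<in> contr_nodes V E k U \<and> contr_label U X = c)"
      "\<forall>X\<in>contr_nodes V E k U. \<forall>Y\<in>contr_nodes V E k U. X \<noteq> Y \<longrightarrow>
          (contr_adj V E k X Y \<longleftrightarrow> differ_on_one U' (contr_label U X) (contr_label U Y))"
    using assms(1) unfolding color_complete_def by blast
  obtain g where g: "is_coloring V E k g" using assms(2) unfolding colorable_def by blast
  then have "is_coloring U' (complete_edges U') k (g |` U)"
    using U'(2) label_comp_in_contr_nodes contr_label_label_comp by metis
  then have "dom (g |` U) = U'" unfolding is_coloring_def by blast
  moreover have "dom (g |` U) = U" using g assms(3) unfolding is_coloring_def by auto
  ultimately have "U' = U" by simp
  then show "card U = m"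
    and "is_coloring U (complete_edges U) k c \<Longrightarrow>
           \<exists>!X. X \<in> contr_nodes V E k U \<and> contr_label U X = c"
    and "X \<in> contr_nodes V E k U \<Longrightarrow> Y \<in> contr_nodes V E k U \<Longrightarrow> X \<noteq> Y \<Longrightarrow>
           contr_adj V E k X Y \<longleftrightarrow> differ_on_one U (contr_label U X) (contr_label U Y)"
    using U' by blast+
qed

definition coarsen ::
  "'a set \<Rightarrow> ('a \<Rightarrow> 'a \<Rightarrow> bool) \<Rightarrow> nat \<Rightarrow> 'a set \<Rightarrow> ('a \<rightharpoonup> nat) set \<Rightarrow> ('a \<rightharpoonup> nat) set" where
  "coarsen V E k U S = (\<Union>a\<in>S. label_comp V E k U a)"

lemma coarsen_label_comp:
  assumes "U \<subseteq> W"
  shows "coarsen V E k U (label_comp V E k W a) = label_comp V E k U a"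
proof -
  have "label_comp V E k U b = label_comp V E k U a" if "b \<in> label_comp V E k W a" for b
  proof -
    have "(same_label_adj V E k U)\<^sup>*\<^sup>* a b"
      using that same_label_reach_mono[OF assms] by (simp add: mem_label_comp)
    then show ?thesis by (simp only: label_comp_eq_iff[symmetric])
  qed
  then have "coarsen V E k U (label_comp V E k W a) = (\<Union>b\<in>label_comp V E k W a. label_comp V E k U a)"
    unfolding coarsen_def by (intro SUP_cong) simp_all
  then show ?thesis using label_comp_self[of a V E k W] by auto
qed

lemma label_comp_refines:
  assumes "U \<subseteq> W" "label_comp V E k W a = label_comp V E k W b"
  shows "label_comp V E k U a = label_comp V E k U b"
  using coarsen_label_comp[OF assms(1), of V E k a] coarsen_label_comp[OF assms(1), of V E k b] assms(2)
  by simp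

lemma three_in_card_le_two:
  assumes "finite X" "card X \<le> 2" "x \<in> X" "y \<in> X" "z \<in> X"
  shows "x = y \<or> x = z \<or> y = z"
proof (rule ccontr)
  assume "\<not> (x = y \<or> x = z \<or> y = z)"
  then have "card {x, y, z} = 3" by simp
  moreover have "card {x, y, z} \<le> card X" using assms by (intro card_mono) auto
  ultimately show False using assms(2) by simp
qed

locale large_clique =
  fixes V :: "'a set" and E :: "'a \<Rightarrow> 'a \<Rightarrow> bool" and k :: nat and T :: "'a set" and v :: 'a
  assumes simple: "simple_graph V E"
    and clique: "is_clique V E T"
    and card_T: "k - 1 \<le> card T"
    and v_in_T: "v \<in> T"
begin

abbreviation "coloring \<equiv> is_coloring V E k"
abbreviation "fine_comp \<equiv> label_comp V E k T"
abbreviation "coarse_comp \<equiv> label_comp V E k (T - {v})"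
abbreviation "coarse_reach \<equiv> (same_label_adj V E k (T - {v}))\<^sup>*\<^sup>*"

lemma T_subset_V: "T \<subseteq> V"
  using clique unfolding is_clique_def by blast

lemma finite_T: "finite T"
  using simple T_subset_V unfolding simple_graph_def by (meson finite_subset)

definition free_colors :: "('a \<rightharpoonup> nat) \<Rightarrow> nat option set" where
  "free_colors g = Some ` {1..k} - g ` (T - {v})"

lemma card_free_colors:
  assumes "coloring g"
  shows "card (free_colors g) \<le> 2"
proof -
  have "g ` (T - {v}) \<subseteq> Some ` {1..k}" using coloring_value[OF assms] T_subset_V by blast
  moreover have "card (g ` (T - {v})) = card T - 1"
    using coloring_clique_inj[OF assms clique] finite_T v_in_T
    by (simp add: card_image inj_on_diff)
  ultimately have "card (free_colors g) = k - (card T - 1)"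
    unfolding free_colors_def by (simp add: card_Diff_subset finite_T card_image)
  then show ?thesis using card_T by simp
qed

lemma color_at_v_free:
  assumes "coloring a" "a |` (T - {v}) = g |` (T - {v})"
  shows "a v \<in> free_colors g"
proof -
  have "a v \<in> Some ` {1..k}" using coloring_value[OF assms(1)] T_subset_V v_in_T by blast
  moreover have "a v \<noteq> g t" if "t \<in> T - {v}" for t
  proof -
    have "g t = a t" using fun_cong[OF assms(2), of t] that by simp
    moreover have "a t \<noteq> a v"
      using inj_on_contraD[OF coloring_clique_inj[OF assms(1) clique]] that v_in_T by blast
    ultimately show ?thesis by simp
  qed
  ultimately show ?thesis unfolding free_colors_def by blast
qed

lemma at_most_two_colors_at_v:
  assumes "coloring a" "coloring b" "coloring c"
    and "b |` (T - {v}) = a |` (T - {v})" "c |` (T - {v}) = a |` (T - {v})"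
  shows "a v = b v \<or> a v = c v \<or> b v = c v"
proof (rule three_in_card_le_two)
  show "finite (free_colors a)" by (simp add: free_colors_def)
  show "card (free_colors a) \<le> 2" by (rule card_free_colors[OF assms(1)])
  show "a v \<in> free_colors a" by (rule color_at_v_free[OF assms(1) refl])
  show "b v \<in> free_colors a" by (rule color_at_v_free[OF assms(2,4)])
  show "c v \<in> free_colors a" by (rule color_at_v_free[OF assms(3,5)])
qed

text \<open>Otherwise \<open>g2 v\<close>, \<open>g4 v\<close> and \<open>g1 u\<close> would be three different colours missing from
  \<open>g2\<close> on \<open>T - {v}\<close>.\<close>

lemma color_at_v_eq_if_parallel_recolorings:
  assumes "col_adj V E k g1 g2" "col_adj V E k g3 g4"
    and u: "u \<in> T - {v}" "g1 u \<noteq> g2 u"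
    and l13: "g3 |` (T - {v}) = g1 |` (T - {v})" and l24: "g4 |` (T - {v}) = g2 |` (T - {v})"
  shows "g1 v = g3 v"
proof (rule ccontr)
  assume "g1 v \<noteq> g3 v"
  have colorings: "coloring g1" "coloring g2" "coloring g3" "coloring g4"
    using assms(1,2) unfolding col_adj_def by auto
  have u13: "g3 u = g1 u" and u24: "g4 u = g2 u"
    using u(1) fun_cong[OF l13, of u] fun_cong[OF l24, of u] by simp_all
  then have "g3 u \<noteq> g4 u" using u(2) by simp
  then have v12: "g1 v = g2 v" and v34: "g3 v = g4 v"
    using col_adj_eq_off[OF assms(1) u(2)] col_adj_eq_off[OF assms(2)] u(1) by auto
  have "g1 u \<in> free_colors g2"
  proof -
    have "g1 u \<noteq> g2 t" if "t \<in> T - {v}" for t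
    proof (cases "t = u")
      case False
      then have "g2 t = g1 t" using col_adj_eq_off[OF assms(1) u(2)] by simp
      moreover have "g1 t \<noteq> g1 u"
        using inj_on_contraD[OF coloring_clique_inj[OF colorings(1) clique]] False that u(1) by blast
      ultimately show ?thesis by simp
    qed (use u in simp)
    moreover have "g1 u \<in> Some ` {1..k}" using coloring_value[OF colorings(1)] u T_subset_V by blast
    ultimately show ?thesis unfolding free_colors_def by blast
  qed
  moreover have "g1 u \<noteq> g1 v" "g3 u \<noteq> g3 v"
    using inj_on_contraD[OF coloring_clique_inj[OF colorings(1) clique]]
      inj_on_contraD[OF coloring_clique_inj[OF colorings(3) clique]] u(1) v_in_T by auto
  then have "g1 u \<noteq> g2 v" "g1 u \<noteq> g4 v" using u13 v12 v34 by simp_all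
  ultimately show False
    using three_in_card_le_two[of "free_colors g2" "g2 v" "g4 v" "g1 u"]
      card_free_colors[OF colorings(2)] color_at_v_free[OF colorings(2) refl]
      color_at_v_free[OF colorings(4) l24] \<open>g1 v \<noteq> g3 v\<close> v12 v34
    by (auto simp: free_colors_def)
qed

context
  assumes inj_T: "injective_nbhd (contr_nodes V E k T) (contr_adj V E k) (contr_label T)"
begin

text \<open>A path leaving the closed neighbourhood of \<open>fine_comp g\<close> would, by injectivity at the
  component it leaves from, produce three colourings agreeing on \<open>T - {v}\<close> with three different
  colours at \<open>v\<close>.\<close>

lemma coarse_reach_closed_nbhd:
  assumes "coloring g" "coarse_reach g d"
  shows "fine_comp d = fine_comp g \<or> contr_adj V E k (fine_comp g) (fine_comp d)"
  using assms(2)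
proof (induction rule: rtranclp_induct)
  case base
  show ?case by simp
next
  case (step d d')
  have d: "coloring d" "d |` (T - {v}) = g |` (T - {v})"
    using step.hyps(1) assms(1) same_label_reach_coloring same_label_reach_label by blast+
  have dd': "col_adj V E k d d'" "d' |` (T - {v}) = d |` (T - {v})"
    using step.hyps(2) unfolding same_label_adj_def by auto
  then have d': "coloring d'" unfolding col_adj_def by blast
  show ?case
  proof (cases "d |` T = d' |` T")
    case True
    then show ?thesis using step.IH label_comp_eq_if_adj_same_label[OF dd'(1)] by metis
  next
    case False
    then have adj_dd': "contr_adj V E k (fine_comp d) (fine_comp d')"
      using contr_adj_label_compI[OF dd'(1)] by blast
    from step.IH show ?thesis
    proof
      assume "fine_comp d = fine_comp g"
      then show ?thesis using adj_dd' by simp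
    next
      assume adj_gd: "contr_adj V E k (fine_comp g) (fine_comp d)"
      show ?thesis
      proof (cases "fine_comp d' = fine_comp g")
        case False
        have nodes: "fine_comp g \<in> contr_nodes V E k T" "fine_comp d \<in> contr_nodes V E k T"
            "fine_comp d' \<in> contr_nodes V E k T"
          using assms(1) d(1) d' label_comp_in_contr_nodes by blast+
        have "g |` T \<noteq> d |` T"
          using contr_adj_label_neq[OF adj_gd nodes(1,2)] by (simp add: contr_label_label_comp)
        moreover have "g |` T \<noteq> d' |` T"
          using inj_T nodes adj_gd adj_dd' False contr_adj_commute contr_label_label_comp
          unfolding injective_nbhd_def by metis
        ultimately have "g v \<noteq> d v" "g v \<noteq> d' v" "d v \<noteq> d' v"
          using \<open>d |` T \<noteq> d' |` T\<close> d(2) dd'(2) restrict_map_eq_iff_at v_in_T by metis+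
        then show ?thesis
          using at_most_two_colors_at_v[OF assms(1) d(1) d' d(2)] d(2) dd'(2) by simp
      qed simp
    qed
  qed
qed

lemma coarse_reach_same_label:
  assumes "coloring g" "coarse_reach g d" "d |` T = g |` T"
  shows "fine_comp d = fine_comp g"
proof -
  have "coloring d" using assms(1,2) same_label_reach_coloring by blast
  then show ?thesis
    using coarse_reach_closed_nbhd[OF assms(1,2)] contr_adj_label_neq[of V E k _ _ T]
      label_comp_in_contr_nodes assms(1,3) contr_label_label_comp by metis
qed

lemma is_forest_coarse:
  assumes "is_forest (contr_nodes V E k T) (contr_adj V E k)"
  shows "is_forest (contr_nodes V E k (T - {v})) (contr_adj V E k)"
  unfolding is_forest_def
proof
  let ?\<pi> = "coarsen V E k (T - {v})"
  have \<pi>_fine_comp: "?\<pi> (fine_comp a) = coarse_comp a" for a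
    using coarsen_label_comp[of "T - {v}" T] by blast
  have "\<exists>S\<in>contr_nodes V E k T. \<exists>S'\<in>contr_nodes V E k T.
          ?\<pi> S = X \<and> ?\<pi> S' = Y \<and> contr_adj V E k S S'"
    if XY: "X \<in> contr_nodes V E k (T - {v})" "Y \<in> contr_nodes V E k (T - {v})"
      "contr_adj V E k X Y" for X Y
  proof -
    obtain g d where gd: "col_adj V E k g d" "g |` (T - {v}) \<noteq> d |` (T - {v})"
        "X = coarse_comp g" "Y = coarse_comp d"
      using contr_adj_nodesE[OF XY(3,1,2)] .
    then have "g |` T \<noteq> d |` T" using restrict_map_eq_subset[of "T - {v}" T] by blast
    then have "contr_adj V E k (fine_comp g) (fine_comp d)" by (rule contr_adj_label_compI[OF gd(1)])
    moreover have "coloring g" "coloring d" using gd(1) unfolding col_adj_def by auto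
    ultimately show ?thesis using gd(3,4) \<pi>_fine_comp label_comp_in_contr_nodes by metis
  qed
  moreover have "S = S' \<or> contr_adj V E k S S'"
    if SS': "S \<in> contr_nodes V E k T" "S' \<in> contr_nodes V E k T" "?\<pi> S = ?\<pi> S'" for S S'
  proof -
    obtain a b where ab: "coloring a" "S = fine_comp a" "coloring b" "S' = fine_comp b"
      using SS'(1,2) unfolding contr_nodes_eq by blast
    then have "coarse_reach a b" using SS'(3) \<pi>_fine_comp by (simp add: label_comp_eq_iff)
    then show ?thesis using coarse_reach_closed_nbhd[OF ab(1)] ab(2,4) by auto
  qed
  moreover assume "has_cycle (contr_nodes V E k (T - {v})) (contr_adj V E k)"
  ultimately have "has_cycle (contr_nodes V E k T) (contr_adj V E k)"
    by (rule has_cycle_lift[where \<pi> = ?\<pi>])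
  then show False using assms unfolding is_forest_def by blast
qed

lemma injective_nbhd_coarse:
  "injective_nbhd (contr_nodes V E k (T - {v})) (contr_adj V E k) (contr_label (T - {v}))"
  unfolding injective_nbhd_def
proof (intro ballI impI notI)
  fix X Y Z
  assume nodes: "X \<in> contr_nodes V E k (T - {v})" "Y \<in> contr_nodes V E k (T - {v})"
      "Z \<in> contr_nodes V E k (T - {v})"
    and adj: "contr_adj V E k X Y \<and> contr_adj V E k X Z \<and> Y \<noteq> Z"
    and same_label: "contr_label (T - {v}) Y = contr_label (T - {v}) Z"
  obtain g1 g2 where g12: "col_adj V E k g1 g2" "g1 |` (T - {v}) \<noteq> g2 |` (T - {v})"
      "X = coarse_comp g1" "Y = coarse_comp g2"
    using contr_adj_nodesE[of V E k X Y] adj nodes by blast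
  obtain g3 g4 where g34: "col_adj V E k g3 g4" "X = coarse_comp g3" "Z = coarse_comp g4"
    using contr_adj_nodesE[of V E k X Z] adj nodes by blast
  have colorings: "coloring g1" "coloring g2" "coloring g3" "coloring g4"
    using g12(1) g34(1) unfolding col_adj_def by auto
  have reach13: "coarse_reach g1 g3"
    using g12(3) g34(2) label_comp_eq_iff[of V E k "T - {v}" g1 g3] by simp
  have l13: "g3 |` (T - {v}) = g1 |` (T - {v})" by (rule same_label_reach_label[OF reach13])
  have l24: "g4 |` (T - {v}) = g2 |` (T - {v})"
    using same_label g12(4) g34(3) by (simp add: contr_label_label_comp)
  obtain u where u: "u \<in> T - {v}" "g1 u \<noteq> g2 u"
    using g12(2) unfolding restrict_map_eq_iff by blast
  have "g3 u \<noteq> g4 u" using u fun_cong[OF l13, of u] fun_cong[OF l24, of u] by simp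
  have "g1 v = g2 v" "g3 v = g4 v"
    using col_adj_eq_off[OF g12(1) u(2)] col_adj_eq_off[OF g34(1) \<open>g3 u \<noteq> g4 u\<close>] u(1) by auto
  moreover have "g1 v = g3 v" by (rule color_at_v_eq_if_parallel_recolorings[OF g12(1) g34(1) u l13 l24])
  ultimately have "g2 v = g4 v" by simp
  have "fine_comp g3 = fine_comp g1"
    using coarse_reach_same_label[OF colorings(1) reach13] restrict_map_eq_iff_at[OF l13 v_in_T]
      \<open>g1 v = g3 v\<close> by simp
  have "g1 |` T \<noteq> g2 |` T" "g3 |` T \<noteq> g4 |` T"
    using u(1) \<open>g1 u \<noteq> g2 u\<close> \<open>g3 u \<noteq> g4 u\<close> fun_cong[of "_ |` T" "_ |` T" u] by auto
  then have "contr_adj V E k (fine_comp g1) (fine_comp g2)" "contr_adj V E k (fine_comp g1) (fine_comp g4)"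
    using contr_adj_label_compI[OF g12(1), where U = T] contr_adj_label_compI[OF g34(1), where U = T]
      \<open>fine_comp g3 = fine_comp g1\<close> by simp_all
  moreover have "fine_comp g2 \<noteq> fine_comp g4"
    using adj g12(4) g34(3) label_comp_refines[of "T - {v}" T] by blast
  ultimately have "contr_label T (fine_comp g2) \<noteq> contr_label T (fine_comp g4)"
    using inj_T colorings label_comp_in_contr_nodes unfolding injective_nbhd_def by blast
  then show False
    using restrict_map_eq_iff_at[OF l24 v_in_T] \<open>g2 v = g4 v\<close> by (simp add: contr_label_label_comp)
qed

end

context
  assumes cc_T: "color_complete (k - 1) k (contr_nodes V E k T) (contr_adj V E k) (contr_label T)"
    and colorable: "colorable V E k"
begin

lemmas card_T_eq = color_complete_contrD(1)[OF cc_T colorable T_subset_V]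
lemmas unique_fine_node = color_complete_contrD(2)[OF cc_T colorable T_subset_V]
lemmas fine_adj_iff = color_complete_contrD(3)[OF cc_T colorable T_subset_V]

lemma card_T_minus_v: "card (T - {v}) = k - 2"
  using card_T_eq finite_T v_in_T by simp

lemma k_ge_2: "2 \<le> k"
  using card_T_eq finite_T v_in_T card_gt_0_iff by fastforce

text \<open>Two colourings with the same label on \<open>T - {v}\<close> differ on \<open>T\<close> at most at \<open>v\<close>, so their
  label components for \<open>T\<close> coincide or are adjacent; an edge between them keeps the label on
  \<open>T - {v}\<close>.\<close>

lemma coarse_comp_eq_if_label_eq:
  assumes "coloring g" "coloring d" "g |` (T - {v}) = d |` (T - {v})"
  shows "coarse_comp g = coarse_comp d"
proof (cases "g |` T = d |` T")
  case True
  have "fine_comp g = fine_comp d"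
    using unique_fine_node[OF coloring_restrict_clique[OF assms(1) clique order_refl]] True
      assms(1,2) label_comp_in_contr_nodes contr_label_label_comp by metis
  then show ?thesis by (rule label_comp_refines[OF Diff_subset])
next
  case False
  then have "g v \<noteq> d v" using restrict_map_eq_iff_at[OF assms(3) v_in_T] by simp
  then have "differ_on_one T (contr_label T (fine_comp g)) (contr_label T (fine_comp d))"
    using assms(3) v_in_T unfolding contr_label_label_comp differ_on_one_iff restrict_map_eq_iff
    by auto
  moreover have "fine_comp g \<noteq> fine_comp d" using False contr_label_label_comp by metis
  ultimately have "contr_adj V E k (fine_comp g) (fine_comp d)"
    using fine_adj_iff assms(1,2) label_comp_in_contr_nodes by blast
  then obtain g' d' where gd': "col_adj V E k g' d'"
      "fine_comp g = fine_comp g'" "fine_comp d = fine_comp d'"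
    using contr_adj_nodesE assms(1,2) label_comp_in_contr_nodes by metis
  then have "g' |` T = g |` T" "d' |` T = d |` T" using contr_label_label_comp by metis+
  then have "g' |` (T - {v}) = d' |` (T - {v})"
    using assms(3) restrict_map_eq_subset[of "T - {v}" T] by (metis Diff_subset)
  then have "coarse_comp g' = coarse_comp d'" by (rule label_comp_eq_if_adj_same_label[OF gd'(1)])
  moreover have "coarse_comp g = coarse_comp g'" using gd'(2) by (rule label_comp_refines[OF Diff_subset])
  moreover have "coarse_comp d = coarse_comp d'" using gd'(3) by (rule label_comp_refines[OF Diff_subset])
  ultimately show ?thesis by simp
qed

lemma ex_coloring_extending:
  assumes "is_coloring (T - {v}) (complete_edges (T - {v})) k c" "p \<in> {1..k}" "p \<notin> ran c"
  obtains g where "coloring g" "g |` T = c(v \<mapsto> p)" "g |` (T - {v}) = c"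
proof -
  have "is_coloring T (complete_edges T) k (c(v \<mapsto> p))"
    using complete_coloring_extend[OF assms, of v] v_in_T insert_Diff by fastforce
  then obtain X where "X \<in> contr_nodes V E k T" "contr_label T X = c(v \<mapsto> p)"
    using unique_fine_node by blast
  then obtain g where g: "coloring g" "g |` T = c(v \<mapsto> p)"
    unfolding contr_nodes_eq by (auto simp: contr_label_label_comp)
  moreover have "dom c = T - {v}" using assms(1) unfolding is_coloring_def by blast
  then have "g |` (T - {v}) = c" using g(2) by (rule restrict_map_upd_diff)
  ultimately show ?thesis using that by blast
qed

lemma unique_coarse_node:
  assumes "is_coloring (T - {v}) (complete_edges (T - {v})) k c"
  shows "\<exists>!X. X \<in> contr_nodes V E k (T - {v}) \<and> contr_label (T - {v}) X = c"
proof -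
  have "dom c = T - {v}" using assms unfolding is_coloring_def by blast
  then have "card (ran c) < k" using card_ran_le_card_dom finite_T card_T_minus_v k_ge_2
    by (metis finite_Diff diff_less le_less_trans zero_less_numeral less_le_trans)
  then obtain p where "p \<in> {1..k}" "p \<notin> ran c"
    using ex_not_in_if_card_less finite_ran finite_T \<open>dom c = T - {v}\<close> by (metis finite_Diff)
  then obtain g where g: "coloring g" "g |` (T - {v}) = c"
    using ex_coloring_extending[OF assms] by metis
  show ?thesis
  proof
    show "coarse_comp g \<in> contr_nodes V E k (T - {v}) \<and> contr_label (T - {v}) (coarse_comp g) = c"
      using g label_comp_in_contr_nodes contr_label_label_comp by metis
  next
    fix X assume X: "X \<in> contr_nodes V E k (T - {v}) \<and> contr_label (T - {v}) X = c"
    then obtain d where "coloring d" "X = coarse_comp d" unfolding contr_nodes_eq by blast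
    then show "X = coarse_comp g"
      using X g coarse_comp_eq_if_label_eq contr_label_label_comp by metis
  qed
qed

lemma coarse_adj_if_differ_on_one:
  assumes "X \<in> contr_nodes V E k (T - {v})" "Y \<in> contr_nodes V E k (T - {v})"
    and differ: "differ_on_one (T - {v}) (contr_label (T - {v}) X) (contr_label (T - {v}) Y)"
  shows "contr_adj V E k X Y"
proof -
  obtain a b where ab: "coloring a" "X = coarse_comp a" "coloring b" "Y = coarse_comp b"
    using assms(1,2) unfolding contr_nodes_eq by blast
  let ?ca = "a |` (T - {v})" and ?cb = "b |` (T - {v})"
  obtain u where u: "u \<in> T - {v}" "?ca u \<noteq> ?cb u" "\<forall>x\<in>T - {v}. x \<noteq> u \<longrightarrow> ?ca x = ?cb x"
    using differ unfolding ab contr_label_label_comp differ_on_one_iff by blast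
  have ca: "is_coloring (T - {v}) (complete_edges (T - {v})) k ?ca"
    by (rule coloring_restrict_clique[OF ab(1) clique Diff_subset])
  have cb: "is_coloring (T - {v}) (complete_edges (T - {v})) k ?cb"
    by (rule coloring_restrict_clique[OF ab(3) clique Diff_subset])
  have dom: "dom ?ca = T - {v}" "dom ?cb = T - {v}"
    using ca cb by (simp_all only: is_coloring_def)
  text \<open>Both labels miss a common colour, which can then be given to \<open>v\<close>.\<close>
  have "finite (ran ?ca \<union> ran ?cb)" using dom finite_T by (simp add: finite_ran)
  moreover have "card (ran ?ca \<union> ran ?cb) < k"
    using card_ran_union_le[OF dom _ u(3)] finite_T card_T_minus_v k_ge_2 by simp
  ultimately obtain p where p: "p \<in> {1..k}" "p \<notin> ran ?ca" "p \<notin> ran ?cb"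
    using ex_not_in_if_card_less by blast
  obtain g where g: "coloring g" "g |` T = ?ca(v \<mapsto> p)" "g |` (T - {v}) = ?ca"
    using ex_coloring_extending[OF ca p(1,2)] by blast
  obtain d where d: "coloring d" "d |` T = ?cb(v \<mapsto> p)" "d |` (T - {v}) = ?cb"
    using ex_coloring_extending[OF cb p(1,3)] by blast
  have gd_differ: "differ_on_one T (contr_label T (fine_comp g)) (contr_label T (fine_comp d))"
    using u unfolding contr_label_label_comp g(2) d(2) differ_on_one_iff by auto
  then have "fine_comp g \<noteq> fine_comp d" using differ_on_one_neq by fastforce
  with gd_differ have "contr_adj V E k (fine_comp g) (fine_comp d)"
    using fine_adj_iff[OF label_comp_in_contr_nodes[OF g(1)] label_comp_in_contr_nodes[OF d(1)]]
    by blast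
  then obtain g' d' where gd': "col_adj V E k g' d'" "g' |` T \<noteq> d' |` T"
      "fine_comp g = fine_comp g'" "fine_comp d = fine_comp d'"
    by (rule contr_adj_nodesE[OF _ label_comp_in_contr_nodes[OF g(1)] label_comp_in_contr_nodes[OF d(1)]])
  have "X = coarse_comp g"
    using coarse_comp_eq_if_label_eq[OF ab(1) g(1)] g(3) ab(2) by simp
  also have "\<dots> = coarse_comp g'" using gd'(3) by (rule label_comp_refines[OF Diff_subset])
  finally have "g' \<in> X" using label_comp_self by blast
  have "Y = coarse_comp d"
    using coarse_comp_eq_if_label_eq[OF ab(3) d(1)] d(3) ab(4) by simp
  also have "\<dots> = coarse_comp d'" using gd'(4) by (rule label_comp_refines[OF Diff_subset])
  finally have "d' \<in> Y" using label_comp_self by blast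
  moreover have "X \<noteq> Y" using differ_on_one_neq[OF differ] by auto
  ultimately show ?thesis using \<open>g' \<in> X\<close> gd'(1) unfolding contr_adj_def by blast
qed

lemma color_complete_coarse:
  "color_complete (k - 2) k (contr_nodes V E k (T - {v})) (contr_adj V E k) (contr_label (T - {v}))"
  unfolding color_complete_def
proof (intro exI[of _ "T - {v}"] conjI ballI allI impI)
  show "finite (T - {v})" using finite_T by simp
  show "card (T - {v}) = k - 2" by (rule card_T_minus_v)
next
  fix X assume "X \<in> contr_nodes V E k (T - {v})"
  then obtain a where "coloring a" "X = coarse_comp a" unfolding contr_nodes_eq by blast
  then show "is_coloring (T - {v}) (complete_edges (T - {v})) k (contr_label (T - {v}) X)"
    using coloring_restrict_clique[OF _ clique Diff_subset] by (simp add: contr_label_label_comp)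
next
  fix c assume "is_coloring (T - {v}) (complete_edges (T - {v})) k c"
  then show "\<exists>!X. X \<in> contr_nodes V E k (T - {v}) \<and> contr_label (T - {v}) X = c"
    by (rule unique_coarse_node)
next
  fix X Y assume XY: "X \<in> contr_nodes V E k (T - {v})" "Y \<in> contr_nodes V E k (T - {v})"
  show "contr_adj V E k X Y \<longleftrightarrow>
      differ_on_one (T - {v}) (contr_label (T - {v}) X) (contr_label (T - {v}) Y)"
    using contr_adj_differ_on_one[OF _ XY] coarse_adj_if_differ_on_one[OF XY] by blast
qed

end

end

theorem lemma7:
  fixes V :: "'a set" and E :: "'a \<Rightarrow> 'a \<Rightarrow> bool" and k :: nat and T :: "'a set" and v :: 'a
  assumes "simple_graph V E" and "chordal V E" and "colorable V E k"
    and "is_clique V E T" and "k - 1 \<le> card T" and "v \<in> T"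
  shows "(color_complete (k - 1) k (contr_nodes V E k T) (contr_adj V E k) (contr_label T)
            \<longrightarrow> color_complete (k - 2) k (contr_nodes V E k (T - {v})) (contr_adj V E k)
                  (contr_label (T - {v})))
       \<and> (is_forest (contr_nodes V E k T) (contr_adj V E k)
            \<and> injective_nbhd (contr_nodes V E k T) (contr_adj V E k) (contr_label T)
            \<longrightarrow> is_forest (contr_nodes V E k (T - {v})) (contr_adj V E k)
              \<and> injective_nbhd (contr_nodes V E k (T - {v})) (contr_adj V E k) (contr_label (T - {v})))"
proof -
  interpret large_clique V E k T v
    using assms(1,4,5,6) by unfold_locales
  show ?thesis
    using color_complete_coarse[OF _ assms(3)] is_forest_coarse injective_nbhd_coarse by blast
qed

end
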